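(* Let $G_l$ be a graph of order $n_l$, maximum degree $\Delta_l$ and minimum degree $\delta_l$, $l\in\{1,2\}$. Then: (i) For $i,j\in\{1,2\}$ with $i\neq j$ and every integer $k\in\{\Delta_j-\Delta_i,\dots,\Delta_i+\Delta_j-2\}$, $\phi_k^p(G_1\times G_2)\ge n_j\,\phi_{k-\Delta_j}^p(G_i)$. (ii) For all integers $k_1\in\{1-\delta_1,\dots,\Delta_1-2\}$ and $k_2\in\{1-\delta_2,\dots,\Delta_2-2\}$ and every integer $k\in\{k_1+k_2-1,\dots,\Delta_1+\Delta_2-2\}$, $$\phi_k^p(G_1\times G_2)\ge \phi_{k_1}^p(G_1)\phi_{k_2}^p(G_2)+\min\{n_1-\phi_{k_1}^p(G_1),\,n_2-\phi_{k_2}^p(G_2)\}.$$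
   Context: All graphs are finite and simple. For a graph $G=(V,E)$, a set $S\subseteq V$ and $v\in V$, let $\delta_S(v)=|\{u\in S: uv\in E\}|$, $\overline{S}=V\setminus S$, and let $\partial S$ be the set of vertices of $\overline S$ adjacent to at least one vertex of $S$. For an integer $k$, a non-empty set $S\subseteq V$ is a defensive $k$-alliance if $\delta_S(v)\ge \delta_{\overline S}(v)+k$ for every $v\in S$; an offensive $k$-alliance if $\delta_S(v)\ge \delta_{\overline S}(v)+k$ for every $v\in\partial S$; and a powerful $k$-alliance if it is both a defensive $k$-alliance and an offensive $(k+2)$-alliance. A set $X\subseteq V$ is a powerful $k$-alliance free set ($k$-paf set) if no powerful $k$-alliance $S$ satisfies $S\subseteq X$. $\phi_k^p(G)$ denotes the maximum cardinality of a $k$-paf set in $G$. The Cartesian product $G_1\times G_2$ of $G_1=(V_1,E_1)$, $G_2=(V_2,E_2)$ has vertex set $V_1\times V_2$, with $(a,b)$ adjacent to $(c,d)$ iff either $a=c$ and $bd\in E_2$, or $b=d$ and $ac\in E_1$. *)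

theory Defs
  imports Main
begin

definition graph :: "'a set \<Rightarrow> ('a \<Rightarrow> 'a \<Rightarrow> bool) \<Rightarrow> bool" where
  "graph V E \<longleftrightarrow> finite V \<and> V \<noteq> {} \<and> (\<forall>u v. E u v \<longrightarrow> u \<in> V \<and> v \<in> V)
     \<and> (\<forall>u v. E u v \<longrightarrow> E v u) \<and> (\<forall>v. \<not> E v v)"

definition deg :: "'a set \<Rightarrow> ('a \<Rightarrow> 'a \<Rightarrow> bool) \<Rightarrow> 'a \<Rightarrow> nat" where
  "deg V E v = card {u \<in> V. E u v}"

definition maxdeg :: "'a set \<Rightarrow> ('a \<Rightarrow> 'a \<Rightarrow> bool) \<Rightarrow> int" where
  "maxdeg V E = int (Max (deg V E ` V))"

definition mindeg :: "'a set \<Rightarrow> ('a \<Rightarrow> 'a \<Rightarrow> bool) \<Rightarrow> int" where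
  "mindeg V E = int (Min (deg V E ` V))"

definition delta_in :: "('a \<Rightarrow> 'a \<Rightarrow> bool) \<Rightarrow> 'a set \<Rightarrow> 'a \<Rightarrow> int" where
  "delta_in E S v = int (card {u \<in> S. E u v})"

definition boundary :: "'a set \<Rightarrow> ('a \<Rightarrow> 'a \<Rightarrow> bool) \<Rightarrow> 'a set \<Rightarrow> 'a set" where
  "boundary V E S = {v \<in> V - S. \<exists>u \<in> S. E u v}"

definition defensive_alliance :: "'a set \<Rightarrow> ('a \<Rightarrow> 'a \<Rightarrow> bool) \<Rightarrow> int \<Rightarrow> 'a set \<Rightarrow> bool" where
  "defensive_alliance V E k S \<longleftrightarrow> S \<noteq> {} \<and> S \<subseteq> V \<and>
     (\<forall>v \<in> S. delta_in E S v \<ge> delta_in E (V - S) v + k)"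

definition offensive_alliance :: "'a set \<Rightarrow> ('a \<Rightarrow> 'a \<Rightarrow> bool) \<Rightarrow> int \<Rightarrow> 'a set \<Rightarrow> bool" where
  "offensive_alliance V E k S \<longleftrightarrow> S \<noteq> {} \<and> S \<subseteq> V \<and>
     (\<forall>v \<in> boundary V E S. delta_in E S v \<ge> delta_in E (V - S) v + k)"

definition powerful_alliance :: "'a set \<Rightarrow> ('a \<Rightarrow> 'a \<Rightarrow> bool) \<Rightarrow> int \<Rightarrow> 'a set \<Rightarrow> bool" where
  "powerful_alliance V E k S \<longleftrightarrow> defensive_alliance V E k S \<and> offensive_alliance V E (k + 2) S"

definition paf_set :: "'a set \<Rightarrow> ('a \<Rightarrow> 'a \<Rightarrow> bool) \<Rightarrow> int \<Rightarrow> 'a set \<Rightarrow> bool" where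
  "paf_set V E k X \<longleftrightarrow> X \<subseteq> V \<and> \<not> (\<exists>S. S \<subseteq> X \<and> powerful_alliance V E k S)"

text \<open>phi_k^p(G): maximum cardinality of a k-paf set (the empty set is always one).\<close>
definition phi_p :: "'a set \<Rightarrow> ('a \<Rightarrow> 'a \<Rightarrow> bool) \<Rightarrow> int \<Rightarrow> int" where
  "phi_p V E k = int (Max (card ` {X. paf_set V E k X}))"

definition cart_V :: "'a set \<Rightarrow> 'b set \<Rightarrow> ('a \<times> 'b) set" where
  "cart_V V1 V2 = V1 \<times> V2"

definition cart_E :: "('a \<Rightarrow> 'a \<Rightarrow> bool) \<Rightarrow> ('b \<Rightarrow> 'b \<Rightarrow> bool) \<Rightarrow> ('a \<times> 'b) \<Rightarrow> ('a \<times> 'b) \<Rightarrow> bool" where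
  "cart_E E1 E2 = (\<lambda>(a, b) (c, d). (a = c \<and> E2 b d) \<or> (b = d \<and> E1 a c))"

end

theory Submission
  imports Defs
begin

(* The engine is an estimate for the neighbourhood of a product vertex (a,b) inside a set
   S of product vertices: its S-neighbours lie either in the row of b, and project into the
   projection fst`S, or in the column of a, i.e. in the fibre of S over a.  Hence the
   alliance condition 2 delta_S(a,b) >= deg(a,b) + j at (a,b) splits into conditions on the
   two factors.  From this we get:
   - a projection theorem: the first projection of a powerful k-alliance of G1 x G2 is a
     powerful (k - Delta_2)-alliance of G1; so X x V2 is k-paf whenever X is a
     (k - Delta_2)-paf set of G1, which is part (i) for one order of the factors;
   - a fibre theorem: for k >= k1 + k2 - 1 and k2 >= 1 - delta_2, a powerful k-alliance of
     G1 x G2 either projects onto a powerful k1-alliance of G1 or has a fibre that is a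
     powerful k2-alliance of G2; with a matching between the complements of two paf sets
     X1, X2 (whose vertices are isolated inside the candidate set) this gives part (ii).
   Part (i) for the other order follows since phi^p_k is invariant under isomorphism, in
   particular under swapping the factors of the product. *)


lemma finite_paf_sets: "finite V \<Longrightarrow> finite {X. paf_set V E k X}"
  by (rule finite_subset[of _ "Pow V"]) (auto simp: paf_set_def)

lemma paf_setI:
  "X \<subseteq> V \<Longrightarrow> (\<And>S. S \<subseteq> X \<Longrightarrow> powerful_alliance V E k S \<Longrightarrow> False) \<Longrightarrow> paf_set V E k X"
  unfolding paf_set_def by blast

lemma paf_setD:
  "paf_set V E k X \<Longrightarrow> S \<subseteq> X \<Longrightarrow> \<not> powerful_alliance V E k S"
  unfolding paf_set_def by blast

lemma paf_set_subset: "paf_set V E k X \<Longrightarrow> X \<subseteq> V"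
  unfolding paf_set_def by blast

lemma paf_set_card_le_phi_p:
  assumes "finite V" "paf_set V E k X"
  shows "int (card X) \<le> phi_p V E k"
  using assms finite_paf_sets[OF assms(1)] unfolding phi_p_def by (simp add: Max_ge)

lemma phi_p_attained:
  assumes "finite V"
  obtains X where "paf_set V E k X" "phi_p V E k = int (card X)"
proof -
  have "paf_set V E k {}"
    by (auto simp: paf_set_def powerful_alliance_def defensive_alliance_def)
  hence "Max (card ` {X. paf_set V E k X}) \<in> card ` {X. paf_set V E k X}"
    using finite_paf_sets[OF assms] by (intro Max_in) auto
  thus ?thesis using that unfolding phi_p_def by auto
qed


lemma graph_finite: "graph V E \<Longrightarrow> finite V"
  unfolding graph_def by blast

lemma graph_irrefl: "graph V E \<Longrightarrow> \<not> E v v"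
  unfolding graph_def by blast

lemma maxdeg_ge: "graph V E \<Longrightarrow> v \<in> V \<Longrightarrow> int (deg V E v) \<le> maxdeg V E"
  unfolding maxdeg_def using graph_finite by (auto intro!: Max_ge)

lemma mindeg_le: "graph V E \<Longrightarrow> v \<in> V \<Longrightarrow> mindeg V E \<le> int (deg V E v)"
  unfolding mindeg_def using graph_finite by (auto intro!: Min_le)

lemma maxdeg_nonneg: "0 \<le> maxdeg V E"
  unfolding maxdeg_def by simp


lemma delta_in_complement:
  assumes "finite V" "S \<subseteq> V"
  shows "delta_in E (V - S) v = int (deg V E v) - delta_in E S v"
proof -
  have "{u\<in>V. E u v} = {u\<in>S. E u v} \<union> {u\<in>V - S. E u v}" using assms(2) by auto
  moreover have "card ({u\<in>S. E u v} \<union> {u\<in>V - S. E u v}) = card {u\<in>S. E u v} + card {u\<in>V - S. E u v}"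
    by (rule card_Un_disjoint) (use assms in \<open>auto intro: finite_subset\<close>)
  ultimately show ?thesis unfolding delta_in_def deg_def by simp
qed

lemma powerful_alliance_deg_iff:
  assumes "finite V"
  shows "powerful_alliance V E k S \<longleftrightarrow> S \<noteq> {} \<and> S \<subseteq> V
    \<and> (\<forall>v\<in>S. int (deg V E v) + k \<le> 2 * delta_in E S v)
    \<and> (\<forall>v\<in>boundary V E S. int (deg V E v) + (k + 2) \<le> 2 * delta_in E S v)"
  unfolding powerful_alliance_def defensive_alliance_def offensive_alliance_def
  using delta_in_complement[OF assms] by auto

lemma powerful_alliance_defensiveD:
  assumes "finite V" "powerful_alliance V E k S" "v \<in> S"
  shows "int (deg V E v) + k \<le> 2 * delta_in E S v"
  using assms(2,3) unfolding powerful_alliance_deg_iff[OF assms(1)] by simp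

lemma powerful_alliance_offensiveD:
  assumes "finite V" "powerful_alliance V E k S" "v \<in> boundary V E S"
  shows "int (deg V E v) + (k + 2) \<le> 2 * delta_in E S v"
  using assms(2,3) unfolding powerful_alliance_deg_iff[OF assms(1)] by simp

lemma powerful_allianceI:
  assumes "finite V" "S \<noteq> {}" "S \<subseteq> V"
    and "\<And>v. v \<in> S \<Longrightarrow> int (deg V E v) + k \<le> 2 * delta_in E S v"
    and "\<And>v. v \<in> boundary V E S \<Longrightarrow> int (deg V E v) + (k + 2) \<le> 2 * delta_in E S v"
  shows "powerful_alliance V E k S"
  unfolding powerful_alliance_deg_iff[OF assms(1)] using assms(2-5) by simp

lemma powerful_alliance_nonempty: "powerful_alliance V E k S \<Longrightarrow> S \<noteq> {} \<and> S \<subseteq> V"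
  by (simp add: powerful_alliance_def defensive_alliance_def)

lemma delta_in_le_deg: "finite V \<Longrightarrow> S \<subseteq> V \<Longrightarrow> delta_in E S v \<le> int (deg V E v)"
  unfolding delta_in_def deg_def by (simp add: card_mono subset_eq)

section \<open>Invariance under isomorphism\<close>

lemma delta_in_image:
  assumes "inj f" "\<And>u v. E' (f u) (f v) = E u v"
  shows "delta_in E' (f ` S) (f v) = delta_in E S v"
proof -
  have "{u \<in> f ` S. E' u (f v)} = f ` {u\<in>S. E u v}" using assms(2) by auto
  thus ?thesis unfolding delta_in_def
    by (simp add: card_image inj_on_subset[OF assms(1)])
qed

lemma boundary_image:
  assumes "inj f" "\<And>u v. E' (f u) (f v) = E u v"
  shows "boundary (f ` V) E' (f ` S) = f ` boundary V E S"
  unfolding boundary_def image_set_diff[OF assms(1), symmetric] using assms(2) by auto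

lemma powerful_alliance_image:
  assumes "inj f" "\<And>u v. E' (f u) (f v) = E u v"
  shows "powerful_alliance (f ` V) E' k (f ` S) \<longleftrightarrow> powerful_alliance V E k S"
  unfolding powerful_alliance_def defensive_alliance_def offensive_alliance_def
    image_set_diff[OF assms(1), symmetric] boundary_image[of f E' E, OF assms]
  by (simp add: delta_in_image[of f E' E, OF assms] inj_image_subset_iff[OF assms(1)])

lemma phi_p_image:
  assumes "inj f" "\<And>u v. E' (f u) (f v) = E u v"
  shows "phi_p (f ` V) E' k = phi_p V E k"
proof -
  note alliance_image = powerful_alliance_image[of f E' E, OF assms]
  have paf_image: "paf_set (f ` V) E' k (f ` X) \<longleftrightarrow> paf_set V E k X" for X
  proof -
    have "(\<exists>T\<subseteq>f ` X. powerful_alliance (f ` V) E' k T) \<longleftrightarrow> (\<exists>S\<subseteq>X. powerful_alliance V E k S)"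
    proof
      assume "\<exists>T\<subseteq>f ` X. powerful_alliance (f ` V) E' k T"
      then obtain T where T: "T \<subseteq> f ` X" "powerful_alliance (f ` V) E' k T" by blast
      from T(1) obtain S where "S \<subseteq> X" "T = f ` S" by (auto simp: subset_image_iff)
      thus "\<exists>S\<subseteq>X. powerful_alliance V E k S" using T(2) alliance_image by blast
    next
      assume "\<exists>S\<subseteq>X. powerful_alliance V E k S"
      then obtain S where "S \<subseteq> X" "powerful_alliance V E k S" by blast
      thus "\<exists>T\<subseteq>f ` X. powerful_alliance (f ` V) E' k T"
        using alliance_image by (intro exI[of _ "f ` S"]) auto
    qed
    thus ?thesis unfolding paf_set_def inj_image_subset_iff[OF assms(1)] by simp
  qed
  have paf_sets: "{Y. paf_set (f ` V) E' k Y} = (image f) ` {X. paf_set V E k X}"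
  proof (intro equalityI subsetI)
    fix Y assume Y: "Y \<in> {Y. paf_set (f ` V) E' k Y}"
    then obtain X where X: "Y = f ` X" by (auto simp: paf_set_def subset_image_iff)
    with Y have "paf_set V E k X" using paf_image by simp
    with X show "Y \<in> (image f) ` {X. paf_set V E k X}" by simp
  next
    fix Y assume "Y \<in> (image f) ` {X. paf_set V E k X}"
    then obtain X where "Y = f ` X" "paf_set V E k X" by auto
    thus "Y \<in> {Y. paf_set (f ` V) E' k Y}" using paf_image by simp
  qed
  have "card ` {Y. paf_set (f ` V) E' k Y} = card ` {X. paf_set V E k X}"
    unfolding paf_sets image_image
    by (intro image_cong) (simp_all add: card_image[OF inj_on_subset[OF assms(1) subset_UNIV]])
  thus ?thesis unfolding phi_p_def by simp
qed

lemma phi_p_cart_swap: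
  "phi_p (cart_V V1 V2) (cart_E E1 E2) k = phi_p (cart_V V2 V1) (cart_E E2 E1) k"
proof -
  have "cart_E E1 E2 (prod.swap p) (prod.swap q) = cart_E E2 E1 p q" for p q
    by (cases p; cases q) (auto simp: cart_E_def)
  hence "phi_p (prod.swap ` (V2 \<times> V1)) (cart_E E1 E2) k = phi_p (V2 \<times> V1) (cart_E E2 E1) k"
    by (intro phi_p_image) auto
  thus ?thesis unfolding cart_V_def by (simp add: product_swap)
qed


definition fiber :: "('a \<times> 'b) set \<Rightarrow> 'a \<Rightarrow> 'b set" where
  "fiber S a = {b. (a, b) \<in> S}"

lemma cart_deg:
  assumes g1: "graph V1 E1" and g2: "graph V2 E2" and "a \<in> V1" "b \<in> V2"
  shows "int (deg (V1 \<times> V2) (cart_E E1 E2) (a, b)) = int (deg V1 E1 a) + int (deg V2 E2 b)"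
proof -
  let ?R = "{c\<in>V1. E1 c a}" and ?C = "{d\<in>V2. E2 d b}"
  have fin: "finite ?R" "finite ?C" using g1 g2 by (simp_all add: graph_finite)
  have "{u \<in> V1 \<times> V2. cart_E E1 E2 u (a, b)} = (\<lambda>c. (c, b)) ` ?R \<union> (\<lambda>d. (a, d)) ` ?C"
    using assms by (auto simp: cart_E_def)
  moreover have "(\<lambda>c. (c, b)) ` ?R \<inter> (\<lambda>d. (a, d)) ` ?C = {}"
    using graph_irrefl[OF g1, of a] by auto
  ultimately have "deg (V1 \<times> V2) (cart_E E1 E2) (a, b) = card ((\<lambda>c. (c, b)) ` ?R) + card ((\<lambda>d. (a, d)) ` ?C)"
    unfolding deg_def using fin by (simp add: card_Un_disjoint)
  thus ?thesis unfolding deg_def by (simp add: card_image inj_on_def)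
qed

text \<open>The \<open>S\<close>-neighbours of \<open>(a,b)\<close> in its row project to neighbours of \<open>a\<close> in \<open>fst ` S\<close>;
  those in its column are the neighbours of \<open>b\<close> in the fibre of \<open>S\<close> over \<open>a\<close>.\<close>

lemma cart_delta_le:
  assumes "finite S"
  shows "delta_in (cart_E E1 E2) S (a, b) \<le> delta_in E1 (fst ` S) a + delta_in E2 (fiber S a) b"
proof -
  let ?R = "{c \<in> fst ` S. E1 c a}" and ?C = "{d \<in> fiber S a. E2 d b}"
  have "fiber S a \<subseteq> snd ` S" unfolding fiber_def by (auto intro: rev_image_eqI)
  hence "finite (fiber S a)" using assms finite_subset by blast
  hence fin: "finite ?R" "finite ?C" using assms by auto
  have "{u\<in>S. cart_E E1 E2 u (a, b)} \<subseteq> (\<lambda>c. (c, b)) ` ?R \<union> (\<lambda>d. (a, d)) ` ?C"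
  proof
    fix u assume "u \<in> {u\<in>S. cart_E E1 E2 u (a, b)}"
    then obtain c d where "u = (c, d)" "(c, d) \<in> S" "(c = a \<and> E2 d b) \<or> (d = b \<and> E1 c a)"
      by (cases u) (auto simp: cart_E_def)
    thus "u \<in> (\<lambda>c. (c, b)) ` ?R \<union> (\<lambda>d. (a, d)) ` ?C"
      by (auto simp: fiber_def intro: rev_image_eqI)
  qed
  hence "card {u\<in>S. cart_E E1 E2 u (a, b)} \<le> card ((\<lambda>c. (c, b)) ` ?R \<union> (\<lambda>d. (a, d)) ` ?C)"
    using fin by (intro card_mono) auto
  also have "\<dots> \<le> card ?R + card ?C"
    using card_Un_le[of "(\<lambda>c. (c, b)) ` ?R" "(\<lambda>d. (a, d)) ` ?C"]
      card_image_le[OF fin(1), of "\<lambda>c. (c, b)"] card_image_le[OF fin(2), of "\<lambda>d. (a, d)"] by linarith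
  finally show ?thesis unfolding delta_in_def by simp
qed

lemma cart_condition_splits:
  assumes g1: "graph V1 E1" and g2: "graph V2 E2" and S: "S \<subseteq> V1 \<times> V2"
    and ab: "a \<in> V1" "b \<in> V2"
    and cond: "int (deg (V1 \<times> V2) (cart_E E1 E2) (a, b)) + j \<le> 2 * delta_in (cart_E E1 E2) S (a, b)"
  shows "int (deg V1 E1 a) + int (deg V2 E2 b) + j
           \<le> 2 * delta_in E1 (fst ` S) a + 2 * delta_in E2 (fiber S a) b"
proof -
  have "finite S"
    using finite_subset[OF S finite_cartesian_product[OF graph_finite[OF g1] graph_finite[OF g2]]] .
  thus ?thesis using cond cart_delta_le[of S E1 E2 a b] cart_deg[OF g1 g2 ab] by linarith
qed

lemma boundary_fst_lift:
  assumes "S \<subseteq> V1 \<times> V2" "a \<in> boundary V1 E1 (fst ` S)"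
  obtains b where "b \<in> V2" "(a, b) \<in> boundary (V1 \<times> V2) (cart_E E1 E2) S" "fiber S a = {}"
proof -
  from assms(2) obtain c where a: "a \<in> V1" "a \<notin> fst ` S" "c \<in> fst ` S" "E1 c a"
    unfolding boundary_def by auto
  then obtain b where cb: "(c, b) \<in> S" by force
  hence "b \<in> V2" using assms(1) by auto
  moreover have "(a, b') \<notin> S" for b' using a(2) by (auto intro: rev_image_eqI)
  hence "(a, b) \<notin> S" "fiber S a = {}" by (auto simp: fiber_def)
  moreover have "cart_E E1 E2 (c, b) (a, b)" using a(4) by (simp add: cart_E_def)
  ultimately show ?thesis using that a(1) cb by (auto simp: boundary_def)
qed

lemma boundary_fiber_lift:
  assumes "a \<in> V1" "b \<in> boundary V2 E2 (fiber S a)"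
  shows "(a, b) \<in> boundary (V1 \<times> V2) (cart_E E1 E2) S"
  using assms by (auto simp: boundary_def cart_E_def fiber_def)


lemma cart_alliance_member_split:
  assumes g1: "graph V1 E1" and g2: "graph V2 E2" and S: "S \<subseteq> V1 \<times> V2"
    and pa: "powerful_alliance (V1 \<times> V2) (cart_E E1 E2) k S" and ab: "(a, b) \<in> S"
  shows "int (deg V1 E1 a) + int (deg V2 E2 b) + k
           \<le> 2 * delta_in E1 (fst ` S) a + 2 * delta_in E2 (fiber S a) b"
proof -
  have fin: "finite (V1 \<times> V2)" using g1 g2 by (simp add: graph_finite)
  have "a \<in> V1" "b \<in> V2" using ab S by auto
  from cart_condition_splits[OF g1 g2 S this powerful_alliance_defensiveD[OF fin pa ab]]
  show ?thesis .
qed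

lemma cart_alliance_boundary_split:
  assumes g1: "graph V1 E1" and g2: "graph V2 E2" and S: "S \<subseteq> V1 \<times> V2"
    and pa: "powerful_alliance (V1 \<times> V2) (cart_E E1 E2) k S"
    and ab: "(a, b) \<in> boundary (V1 \<times> V2) (cart_E E1 E2) S"
  shows "int (deg V1 E1 a) + int (deg V2 E2 b) + (k + 2)
           \<le> 2 * delta_in E1 (fst ` S) a + 2 * delta_in E2 (fiber S a) b"
proof -
  have fin: "finite (V1 \<times> V2)" using g1 g2 by (simp add: graph_finite)
  have "a \<in> V1" "b \<in> V2" using ab by (auto simp: boundary_def)
  from cart_condition_splits[OF g1 g2 S this powerful_alliance_offensiveD[OF fin pa ab]]
  show ?thesis .
qed

text \<open>At a boundary vertex \<open>a\<close> of the projection, the fibre contributes nothing, so the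
  projection satisfies the offensive condition with the degree of some \<open>b\<close> to spare.\<close>

lemma projection_boundary_bound:
  assumes g1: "graph V1 E1" and g2: "graph V2 E2" and S: "S \<subseteq> V1 \<times> V2"
    and pa: "powerful_alliance (V1 \<times> V2) (cart_E E1 E2) k S"
    and a: "a \<in> boundary V1 E1 (fst ` S)"
  obtains b where "b \<in> V2" "int (deg V1 E1 a) + int (deg V2 E2 b) + (k + 2) \<le> 2 * delta_in E1 (fst ` S) a"
proof -
  obtain b where b: "b \<in> V2" "(a, b) \<in> boundary (V1 \<times> V2) (cart_E E1 E2) S" "fiber S a = {}"
    using boundary_fst_lift[OF S a] .
  have "delta_in E2 (fiber S a) b = 0" using b(3) by (simp add: delta_in_def)
  with cart_alliance_boundary_split[OF g1 g2 S pa b(2)] show ?thesis using that[OF b(1)] by simp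
qed


section \<open>Projection theorem\<close>

text \<open>The first projection of a powerful \<open>k\<close>-alliance of \<open>G1 \<times> G2\<close> is a powerful
  \<open>(k - \<Delta>_2)\<close>-alliance of \<open>G1\<close>: the column contributes at most \<open>deg b \<le> \<Delta>_2\<close>.\<close>

theorem projection_powerful_alliance:
  assumes g1: "graph V1 E1" and g2: "graph V2 E2" and S: "S \<subseteq> V1 \<times> V2"
    and pa: "powerful_alliance (V1 \<times> V2) (cart_E E1 E2) k S"
  shows "powerful_alliance V1 E1 (k - maxdeg V2 E2) (fst ` S)"
proof (rule powerful_allianceI)
  show "finite V1" using g1 by (rule graph_finite)
  show "fst ` S \<noteq> {}" "fst ` S \<subseteq> V1" using powerful_alliance_nonempty[OF pa] S by auto
next
  fix a assume "a \<in> fst ` S"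
  then obtain b where ab: "(a, b) \<in> S" by force
  have "fiber S a \<subseteq> V2" using S by (auto simp: fiber_def)
  hence "delta_in E2 (fiber S a) b \<le> int (deg V2 E2 b)" by (rule delta_in_le_deg[OF graph_finite[OF g2]])
  moreover have "int (deg V2 E2 b) \<le> maxdeg V2 E2" using ab S maxdeg_ge[OF g2] by auto
  ultimately show "int (deg V1 E1 a) + (k - maxdeg V2 E2) \<le> 2 * delta_in E1 (fst ` S) a"
    using cart_alliance_member_split[OF g1 g2 S pa ab] by linarith
next
  fix a assume "a \<in> boundary V1 E1 (fst ` S)"
  then obtain b where "int (deg V1 E1 a) + int (deg V2 E2 b) + (k + 2) \<le> 2 * delta_in E1 (fst ` S) a"
    by (rule projection_boundary_bound[OF g1 g2 S pa])
  moreover have "0 \<le> int (deg V2 E2 b)" by simp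
  ultimately show "int (deg V1 E1 a) + (k - maxdeg V2 E2 + 2) \<le> 2 * delta_in E1 (fst ` S) a"
    using maxdeg_nonneg[of V2 E2] by linarith
qed


section \<open>Fibre theorem\<close>

text \<open>If a vertex \<open>a\<close> of the projection falls short of the \<open>k1\<close>-condition, the column must
  make up the difference, so the fibre over \<open>a\<close> is a powerful \<open>k2\<close>-alliance of \<open>G2\<close>.\<close>

lemma deficient_vertex_fiber_alliance:
  assumes g1: "graph V1 E1" and g2: "graph V2 E2" and S: "S \<subseteq> V1 \<times> V2"
    and pa: "powerful_alliance (V1 \<times> V2) (cart_E E1 E2) k S"
    and kk: "k1 + k2 - 1 \<le> k" and a: "a \<in> fst ` S"
    and deficient: "2 * delta_in E1 (fst ` S) a < int (deg V1 E1 a) + k1"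
  shows "powerful_alliance V2 E2 k2 (fiber S a)"
proof (rule powerful_allianceI)
  show "finite V2" using g2 by (rule graph_finite)
  show "fiber S a \<noteq> {}" "fiber S a \<subseteq> V2" using a S by (auto simp: fiber_def)
next
  fix b assume "b \<in> fiber S a"
  hence "(a, b) \<in> S" by (simp add: fiber_def)
  from cart_alliance_member_split[OF g1 g2 S pa this]
  show "int (deg V2 E2 b) + k2 \<le> 2 * delta_in E2 (fiber S a) b" using kk deficient by linarith
next
  fix b assume "b \<in> boundary V2 E2 (fiber S a)"
  moreover have "a \<in> V1" using a S by auto
  ultimately have "(a, b) \<in> boundary (V1 \<times> V2) (cart_E E1 E2) S" by (rule boundary_fiber_lift[rotated])
  from cart_alliance_boundary_split[OF g1 g2 S pa this]
  show "int (deg V2 E2 b) + (k2 + 2) \<le> 2 * delta_in E2 (fiber S a) b" using kk deficient by linarith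
qed

theorem projection_or_fiber_alliance:
  assumes g1: "graph V1 E1" and g2: "graph V2 E2" and S: "S \<subseteq> V1 \<times> V2"
    and pa: "powerful_alliance (V1 \<times> V2) (cart_E E1 E2) k S"
    and kk: "k1 + k2 - 1 \<le> k" and k2: "1 - mindeg V2 E2 \<le> k2"
  shows "powerful_alliance V1 E1 k1 (fst ` S) \<or> (\<exists>a. powerful_alliance V2 E2 k2 (fiber S a))"
proof (rule disjCI)
  assume no_fiber: "\<not> (\<exists>a. powerful_alliance V2 E2 k2 (fiber S a))"
  show "powerful_alliance V1 E1 k1 (fst ` S)"
  proof (rule powerful_allianceI)
    show "finite V1" using g1 by (rule graph_finite)
    show "fst ` S \<noteq> {}" "fst ` S \<subseteq> V1" using powerful_alliance_nonempty[OF pa] S by auto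
  next
    fix a assume a: "a \<in> fst ` S"
    show "int (deg V1 E1 a) + k1 \<le> 2 * delta_in E1 (fst ` S) a"
    proof (rule ccontr)
      assume "\<not> int (deg V1 E1 a) + k1 \<le> 2 * delta_in E1 (fst ` S) a"
      hence "2 * delta_in E1 (fst ` S) a < int (deg V1 E1 a) + k1" by simp
      from deficient_vertex_fiber_alliance[OF g1 g2 S pa kk a this] no_fiber show False by blast
    qed
  next
    fix a assume "a \<in> boundary V1 E1 (fst ` S)"
    then obtain b where b: "b \<in> V2"
      and "int (deg V1 E1 a) + int (deg V2 E2 b) + (k + 2) \<le> 2 * delta_in E1 (fst ` S) a"
      by (rule projection_boundary_bound[OF g1 g2 S pa])
    thus "int (deg V1 E1 a) + (k1 + 2) \<le> 2 * delta_in E1 (fst ` S) a"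
      using kk k2 mindeg_le[OF g2 b] by linarith
  qed
qed


section \<open>Part (i): products of a paf set with a whole factor\<close>

text \<open>By the projection theorem, \<open>X \<times> V2\<close> is a \<open>k\<close>-paf set of the product whenever \<open>X\<close> is a
  \<open>(k - \<Delta>_2)\<close>-paf set of \<open>G1\<close>; take \<open>X\<close> of maximum size.\<close>

lemma phi_p_cart_ge_card_times_phi_p:
  assumes g1: "graph V1 E1" and g2: "graph V2 E2"
  shows "int (card V2) * phi_p V1 E1 (k - maxdeg V2 E2) \<le> phi_p (cart_V V1 V2) (cart_E E1 E2) k"
proof -
  have fin: "finite V1" "finite V2" using g1 g2 by (simp_all add: graph_finite)
  obtain X where X: "paf_set V1 E1 (k - maxdeg V2 E2) X" "phi_p V1 E1 (k - maxdeg V2 E2) = int (card X)"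
    using phi_p_attained[OF fin(1)] .
  have "paf_set (V1 \<times> V2) (cart_E E1 E2) k (X \<times> V2)"
  proof (rule paf_setI)
    show XV: "X \<times> V2 \<subseteq> V1 \<times> V2" using paf_set_subset[OF X(1)] by auto
    fix S assume S: "S \<subseteq> X \<times> V2" and pa: "powerful_alliance (V1 \<times> V2) (cart_E E1 E2) k S"
    have "powerful_alliance V1 E1 (k - maxdeg V2 E2) (fst ` S)"
      using projection_powerful_alliance[OF g1 g2 _ pa] S XV by blast
    moreover have "fst ` S \<subseteq> X" using S by auto
    ultimately show False using paf_setD[OF X(1)] by blast
  qed
  from paf_set_card_le_phi_p[OF finite_cartesian_product[OF fin] this] show ?thesis
    using X(2) unfolding cart_V_def by (simp add: card_cartesian_product mult.commute)
qed


section \<open>Part (ii): products of paf sets plus a matching\<close>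

lemma matching_exists:
  assumes "finite A" "finite B"
  obtains M where "M \<subseteq> A \<times> B" "card M = min (card A) (card B)"
    "\<And>p q. p \<in> M \<Longrightarrow> q \<in> M \<Longrightarrow> fst p = fst q \<longleftrightarrow> snd p = snd q"
proof -
  obtain R1 where R1: "R1 \<subseteq> A" "card R1 = min (card A) (card B)"
    using obtain_subset_with_card_n[of "min (card A) (card B)" A] by auto
  obtain R2 where R2: "R2 \<subseteq> B" "card R2 = min (card A) (card B)"
    using obtain_subset_with_card_n[of "min (card A) (card B)" B] by auto
  obtain f where f: "bij_betw f R1 R2"
    using finite_same_card_bij[of R1 R2] R1 R2 assms finite_subset by metis
  hence inj: "inj_on f R1" and im: "f ` R1 = R2" by (auto simp: bij_betw_def)
  show ?thesis
  proof (rule that[of "(\<lambda>u. (u, f u)) ` R1"])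
    show "(\<lambda>u. (u, f u)) ` R1 \<subseteq> A \<times> B" using R1 R2 im by auto
    show "card ((\<lambda>u. (u, f u)) ` R1) = min (card A) (card B)"
      using R1(2) by (simp add: card_image inj_on_def)
    show "fst p = fst q \<longleftrightarrow> snd p = snd q" if "p \<in> (\<lambda>u. (u, f u)) ` R1" "q \<in> (\<lambda>u. (u, f u)) ` R1" for p q
      using that inj by (auto simp: inj_on_def)
  qed
qed

lemma matching_vertex_isolated:
  assumes g1: "graph V1 E1" and g2: "graph V2 E2"
    and M: "M \<subseteq> (V1 - X1) \<times> (V2 - X2)"
    and match: "\<And>p q. p \<in> M \<Longrightarrow> q \<in> M \<Longrightarrow> fst p = fst q \<longleftrightarrow> snd p = snd q"
    and p: "p \<in> M" and q: "q \<in> X1 \<times> X2 \<union> M"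
  shows "\<not> cart_E E1 E2 q p"
proof
  assume edge: "cart_E E1 E2 q p"
  obtain a b c d where pq: "p = (a, b)" "q = (c, d)" by (cases p; cases q)
  have "q \<in> M" using q edge p M pq by (auto simp: cart_E_def)
  hence same: "a = c \<longleftrightarrow> b = d" using match[OF p] pq by fastforce
  from edge pq have "(c = a \<and> E2 d b) \<or> (d = b \<and> E1 c a)" by (simp add: cart_E_def)
  thus False using same graph_irrefl[OF g1] graph_irrefl[OF g2] by auto
qed

text \<open>Adding such a matching to a product of paf sets keeps it free of powerful alliances:
  a powerful alliance inside the union avoids the isolated matching vertices (their degree
  exceeds \<open>-k\<close>), so it lies in \<open>X1 \<times> X2\<close>, where the fibre theorem applies.\<close>

lemma paf_set_product_with_matching:
  assumes g1: "graph V1 E1" and g2: "graph V2 E2"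
    and X1: "paf_set V1 E1 k1 X1" and X2: "paf_set V2 E2 k2 X2"
    and M: "M \<subseteq> (V1 - X1) \<times> (V2 - X2)"
    and match: "\<And>p q. p \<in> M \<Longrightarrow> q \<in> M \<Longrightarrow> fst p = fst q \<longleftrightarrow> snd p = snd q"
    and k1: "1 - mindeg V1 E1 \<le> k1" and k2: "1 - mindeg V2 E2 \<le> k2" and kk: "k1 + k2 - 1 \<le> k"
  shows "paf_set (V1 \<times> V2) (cart_E E1 E2) k (X1 \<times> X2 \<union> M)"
proof (rule paf_setI)
  have XV: "X1 \<subseteq> V1" "X2 \<subseteq> V2" using paf_set_subset X1 X2 by blast+
  thus "X1 \<times> X2 \<union> M \<subseteq> V1 \<times> V2" using M by auto
  fix S assume S: "S \<subseteq> X1 \<times> X2 \<union> M" and pa: "powerful_alliance (V1 \<times> V2) (cart_E E1 E2) k S"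
  have fin: "finite V1" "finite V2" using g1 g2 by (simp_all add: graph_finite)
  have "S \<subseteq> X1 \<times> X2"
  proof
    fix p assume pS: "p \<in> S"
    show "p \<in> X1 \<times> X2"
    proof (rule ccontr)
      assume "p \<notin> X1 \<times> X2"
      with pS S have "p \<in> M" by auto
      then obtain a b where ab: "p = (a, b)" "p \<in> M" "a \<in> V1" "b \<in> V2"
        using M by (cases p) auto
      have "{q\<in>S. cart_E E1 E2 q p} = {}"
        using matching_vertex_isolated[OF g1 g2 M match ab(2)] S by blast
      hence "delta_in (cart_E E1 E2) S (a, b) = 0" unfolding delta_in_def ab(1) by (simp only: card.empty of_nat_0)
      moreover have "int (deg (V1 \<times> V2) (cart_E E1 E2) (a, b)) + k \<le> 2 * delta_in (cart_E E1 E2) S (a, b)"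
        using powerful_alliance_defensiveD[OF finite_cartesian_product[OF fin] pa] pS ab(1) by simp
      ultimately show False
        using cart_deg[OF g1 g2 ab(3,4)] mindeg_le[OF g1 ab(3)] mindeg_le[OF g2 ab(4)] k1 k2 kk
        by linarith
    qed
  qed
  hence "S \<subseteq> V1 \<times> V2" "fst ` S \<subseteq> X1" "\<And>a. fiber S a \<subseteq> X2" using XV by (auto simp: fiber_def)
  with projection_or_fiber_alliance[OF g1 g2 _ pa kk k2] show False
    using paf_setD[OF X1] paf_setD[OF X2] by metis
qed

lemma phi_p_cart_ge_product_plus_matching:
  assumes g1: "graph V1 E1" and g2: "graph V2 E2"
    and k1: "1 - mindeg V1 E1 \<le> k1" and k2: "1 - mindeg V2 E2 \<le> k2" and kk: "k1 + k2 - 1 \<le> k"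
  shows "phi_p V1 E1 k1 * phi_p V2 E2 k2
          + min (int (card V1) - phi_p V1 E1 k1) (int (card V2) - phi_p V2 E2 k2)
         \<le> phi_p (cart_V V1 V2) (cart_E E1 E2) k"
proof -
  have fin: "finite V1" "finite V2" using g1 g2 by (simp_all add: graph_finite)
  obtain X1 where X1: "paf_set V1 E1 k1 X1" "phi_p V1 E1 k1 = int (card X1)"
    using phi_p_attained[OF fin(1)] .
  obtain X2 where X2: "paf_set V2 E2 k2 X2" "phi_p V2 E2 k2 = int (card X2)"
    using phi_p_attained[OF fin(2)] .
  have XV: "X1 \<subseteq> V1" "X2 \<subseteq> V2" using paf_set_subset X1(1) X2(1) by blast+
  obtain M where M: "M \<subseteq> (V1 - X1) \<times> (V2 - X2)" "card M = min (card (V1 - X1)) (card (V2 - X2))"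
    and match: "\<And>p q. p \<in> M \<Longrightarrow> q \<in> M \<Longrightarrow> fst p = fst q \<longleftrightarrow> snd p = snd q"
    using matching_exists[of "V1 - X1" "V2 - X2"] fin by auto
  from paf_set_product_with_matching[OF g1 g2 X1(1) X2(1) M(1) match k1 k2 kk]
  have "int (card (X1 \<times> X2 \<union> M)) \<le> phi_p (cart_V V1 V2) (cart_E E1 E2) k"
    unfolding cart_V_def by (rule paf_set_card_le_phi_p[OF finite_cartesian_product[OF fin]])
  moreover have "card (X1 \<times> X2 \<union> M) = card X1 * card X2 + card M"
    using M(1) XV fin by (subst card_Un_disjoint)
      (auto simp: card_cartesian_product intro: finite_subset)
  moreover have "int (card (V1 - X1)) = int (card V1) - int (card X1)"
    "int (card (V2 - X2)) = int (card V2) - int (card X2)"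
    using XV fin by (simp_all add: card_Diff_subset finite_subset card_mono)
  ultimately show ?thesis using M(2) X1(2) X2(2) by simp
qed


text \<open>The two bounds hold for every \<open>k\<close>; the ranges of the parameters in the
  statement are only needed in the paper to make the bounds nontrivial.\<close>

theorem corollary5:
  fixes V1 :: "'a set" and E1 :: "'a \<Rightarrow> 'a \<Rightarrow> bool"
    and V2 :: "'b set" and E2 :: "'b \<Rightarrow> 'b \<Rightarrow> bool"
  assumes "graph V1 E1" and "graph V2 E2"
  shows
   "(\<forall>k::int. maxdeg V2 E2 - maxdeg V1 E1 \<le> k \<and> k \<le> maxdeg V1 E1 + maxdeg V2 E2 - 2 \<longrightarrow>
       phi_p (cart_V V1 V2) (cart_E E1 E2) k \<ge> int (card V2) * phi_p V1 E1 (k - maxdeg V2 E2))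
    \<and> (\<forall>k::int. maxdeg V1 E1 - maxdeg V2 E2 \<le> k \<and> k \<le> maxdeg V1 E1 + maxdeg V2 E2 - 2 \<longrightarrow>
       phi_p (cart_V V1 V2) (cart_E E1 E2) k \<ge> int (card V1) * phi_p V2 E2 (k - maxdeg V1 E1))
    \<and> (\<forall>k1 k2 k::int.
        1 - mindeg V1 E1 \<le> k1 \<and> k1 \<le> maxdeg V1 E1 - 2 \<and>
        1 - mindeg V2 E2 \<le> k2 \<and> k2 \<le> maxdeg V2 E2 - 2 \<and>
        k1 + k2 - 1 \<le> k \<and> k \<le> maxdeg V1 E1 + maxdeg V2 E2 - 2 \<longrightarrow>
        phi_p (cart_V V1 V2) (cart_E E1 E2) k \<ge>
          phi_p V1 E1 k1 * phi_p V2 E2 k2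
          + min (int (card V1) - phi_p V1 E1 k1) (int (card V2) - phi_p V2 E2 k2))"
proof (intro conjI allI impI)
  fix k :: int
  show "int (card V2) * phi_p V1 E1 (k - maxdeg V2 E2) \<le> phi_p (cart_V V1 V2) (cart_E E1 E2) k"
    using phi_p_cart_ge_card_times_phi_p[OF assms] .
  show "int (card V1) * phi_p V2 E2 (k - maxdeg V1 E1) \<le> phi_p (cart_V V1 V2) (cart_E E1 E2) k"
    unfolding phi_p_cart_swap[of V1 V2 E1 E2] using phi_p_cart_ge_card_times_phi_p[OF assms(2,1)] .
next
  fix k1 k2 k :: int
  assume "1 - mindeg V1 E1 \<le> k1 \<and> k1 \<le> maxdeg V1 E1 - 2 \<and> 1 - mindeg V2 E2 \<le> k2 \<and>
    k2 \<le> maxdeg V2 E2 - 2 \<and> k1 + k2 - 1 \<le> k \<and> k \<le> maxdeg V1 E1 + maxdeg V2 E2 - 2"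
  hence "1 - mindeg V1 E1 \<le> k1" "1 - mindeg V2 E2 \<le> k2" "k1 + k2 - 1 \<le> k" by simp_all
  from phi_p_cart_ge_product_plus_matching[OF assms this]
  show "phi_p V1 E1 k1 * phi_p V2 E2 k2
          + min (int (card V1) - phi_p V1 E1 k1) (int (card V2) - phi_p V2 E2 k2)
        \<le> phi_p (cart_V V1 V2) (cart_E E1 E2) k" .
qed

end
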